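(* Let $T\in\mathcal{K}(V)$ with $\rho_S(T)\neq\emptyset$ and let $E_1,E_2$ be projections on $V$ (i.e. $E_i\in\mathcal{B}(V)$, $E_i^2=E_i$) such that $E_1+E_2=\mathcal{I}$ (hence $E_1E_2=E_2E_1=0$). Denote $V_i:=E_i(V)$ and $\operatorname{dom}(T_i):=E_i(\operatorname{dom}(T))$, and assume that $\operatorname{dom}(T_i)\subset\operatorname{dom}(T)$, $T(\operatorname{dom}(T_i))\subset V_i$ and that $T_i:=T|_{\operatorname{dom}(T_i)}$ is a closed operator on the right Banach module $V_i$, $i=1,2$. Then (i) $E_iTv=TE_iv$ for $v\in\operatorname{dom}(T)$; (ii) $\operatorname{dom}(T_i^2)=E_i(\operatorname{dom}(T^2))$ for $i\in\{1,2\}$; (iii) $\operatorname{ran}(\mathcal{Q}_s(T))=\operatorname{ran}(\mathcal{Q}_s(T_1))\oplus\operatorname{ran}(\mathcal{Q}_s(T_2))$ for every $s\in\mathbb{F}_0$; (iv) $\sigma_S(T)=\sigma_S(T_1)\cup\sigma_S(T_2)$; (v) $\sigma_{Sp}(T)=\sigma_{Sp}(T_1)\cup\sigma_{Sp}(T_2)$. If moreover $\sigma_S(T_1)\cap\sigma_S(T_2)=\emptyset$, then (vi) $\sigma_{Sc}(T)=\sigma_{Sc}(T_1)\cup\sigma_{Sc}(T_2)$ and (vii) $\sigma_{Sr}(T)=\sigma_{Sr}(T_1)\cup\sigma_{Sr}(T_2)$.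
   Context: Standing setting: either (a) $\mathbb{F}_0=\mathbb{F}=\mathbb{H}$, $V$ a two-sided quaternionic Banach space, $\mathcal{K}(V)$ the closed right linear operators on $V$; or (b) $\mathbb{F}=\mathbb{R}_n$ the real Clifford algebra generated by $e_1,\dots,e_n$, $\mathbb{F}_0=\mathbb{R}^{n+1}$ the paravectors $x_0+\sum x_ie_i$, $V=V_{\mathbb{R}}\otimes\mathbb{R}_n$ for a real Banach space $V_{\mathbb{R}}$, $\mathcal{K}(V)$ the operators of paravector type $T=T_0+\sum_{i=1}^nT_ie_i$ with closed $T_i$ on $V_{\mathbb{R}}$. $\mathcal{B}(V)$ bounded everywhere defined right linear operators, $\mathcal{I}$ identity. For a closed right linear operator $A$ on a right Banach module $W$ (here $W=V$ or $W=V_i$) and $s\in\mathbb{F}_0$, $\mathcal{Q}_s(A)=A^2-2\Re(s)A+|s|^2\mathcal{I}$ on $\operatorname{dom}(A^2)$; $\rho_S(A)=\{s\in\mathbb{F}_0:\mathcal{Q}_s(A)$ has a bounded inverse defined on all of $W\}$, $\sigma_S(A)=\mathbb{F}_0\setminus\rho_S(A)$. The point $S$-spectrum $\sigma_{Sp}(A)$ is the set of $s\in\mathbb{F}_0$ with $\ker\mathcal{Q}_s(A)\neq\{0\}$; the continuous $S$-spectrum $\sigma_{Sc}(A)$ is the set of $s$ with $\ker\mathcal{Q}_s(A)=\{0\}$ and $\operatorname{ran}\mathcal{Q}_s(A)$ dense in but different from $W$; the residual $S$-spectrum $\sigma_{Sr}(A)$ is the set of $s$ with $\ker\mathcal{Q}_s(A)=\{0\}$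 and $\operatorname{ran}\mathcal{Q}_s(A)$ not dense in $W$. $\oplus$ denotes a direct sum of right submodules. *)

theory Defs
  imports "HOL-Analysis.Analysis"
begin

text \<open>Operators are given by a domain D and a function f (only relevant on D).
  A right Banach module W is a closed right submodule of the ambient Banach space.\<close>

definition rsubmod :: "('v::real_normed_vector \<Rightarrow> 'f \<Rightarrow> 'v) \<Rightarrow> 'v set \<Rightarrow> bool" where
  "rsubmod rmul M \<longleftrightarrow> 0 \<in> M \<and> (\<forall>x\<in>M. \<forall>y\<in>M. x + y \<in> M) \<and> (\<forall>x\<in>M. \<forall>a. rmul x a \<in> M)"

definition rlinear_on :: "('v::real_normed_vector \<Rightarrow> 'f \<Rightarrow> 'v) \<Rightarrow> 'v set \<Rightarrow> ('v \<Rightarrow> 'v) \<Rightarrow> bool" where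
  "rlinear_on rmul D f \<longleftrightarrow> rsubmod rmul D \<and> (\<forall>x\<in>D. \<forall>y\<in>D. f (x + y) = f x + f y)
      \<and> (\<forall>x\<in>D. \<forall>a. f (rmul x a) = rmul (f x) a)"

definition closed_rop :: "('v::real_normed_vector \<Rightarrow> 'f \<Rightarrow> 'v) \<Rightarrow> 'v set \<Rightarrow> 'v set \<Rightarrow> ('v \<Rightarrow> 'v) \<Rightarrow> bool" where
  "closed_rop rmul W D f \<longleftrightarrow> rsubmod rmul W \<and> closed W \<and> D \<subseteq> W \<and> rlinear_on rmul D f
      \<and> f ` D \<subseteq> W \<and> closed {(x, f x) | x. x \<in> D}"

definition bounded_rop :: "('v::real_normed_vector \<Rightarrow> 'f \<Rightarrow> 'v) \<Rightarrow> ('v \<Rightarrow> 'v) \<Rightarrow> bool" where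
  "bounded_rop rmul E \<longleftrightarrow> rlinear_on rmul UNIV E \<and> (\<exists>K. \<forall>x. norm (E x) \<le> K * norm x)"

definition dom2 :: "'v set \<Rightarrow> ('v \<Rightarrow> 'v) \<Rightarrow> 'v set" where
  "dom2 D f = {x \<in> D. f x \<in> D}"

text \<open>Q_s(A) x = A^2 x - 2 Re(s) A x + |s|^2 x, with r = Re(s), m = |s|\<close>
definition Qop :: "('v::real_normed_vector \<Rightarrow> 'v) \<Rightarrow> real \<Rightarrow> real \<Rightarrow> 'v \<Rightarrow> 'v" where
  "Qop f r m x = f (f x) - (2 * r) *\<^sub>R f x + (m ^ 2) *\<^sub>R x"

definition ranQ :: "('f \<Rightarrow> real) \<Rightarrow> ('f \<Rightarrow> real) \<Rightarrow> 'f \<Rightarrow> 'v::real_normed_vector set \<Rightarrow> ('v \<Rightarrow> 'v) \<Rightarrow> 'v set" where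
  "ranQ re nrm s D f = Qop f (re s) (nrm s) ` dom2 D f"

definition kerQ_trivial :: "('f \<Rightarrow> real) \<Rightarrow> ('f \<Rightarrow> real) \<Rightarrow> 'f \<Rightarrow> 'v::real_normed_vector set \<Rightarrow> ('v \<Rightarrow> 'v) \<Rightarrow> bool" where
  "kerQ_trivial re nrm s D f \<longleftrightarrow> (\<forall>x\<in>dom2 D f. Qop f (re s) (nrm s) x = 0 \<longrightarrow> x = 0)"

definition rhoS :: "'f set \<Rightarrow> ('f \<Rightarrow> real) \<Rightarrow> ('f \<Rightarrow> real) \<Rightarrow> 'v::real_normed_vector set \<Rightarrow> 'v set \<Rightarrow> ('v \<Rightarrow> 'v) \<Rightarrow> 'f set" where
  "rhoS F0 re nrm W D f = {s \<in> F0. \<exists>B.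
      (\<forall>w\<in>W. B w \<in> dom2 D f \<and> Qop f (re s) (nrm s) (B w) = w)
    \<and> (\<forall>x\<in>dom2 D f. B (Qop f (re s) (nrm s) x) = x)
    \<and> (\<exists>K. \<forall>w\<in>W. norm (B w) \<le> K * norm w)}"

definition sigmaS :: "'f set \<Rightarrow> ('f \<Rightarrow> real) \<Rightarrow> ('f \<Rightarrow> real) \<Rightarrow> 'v::real_normed_vector set \<Rightarrow> 'v set \<Rightarrow> ('v \<Rightarrow> 'v) \<Rightarrow> 'f set" where
  "sigmaS F0 re nrm W D f = F0 - rhoS F0 re nrm W D f"

definition sigmaSp :: "'f set \<Rightarrow> ('f \<Rightarrow> real) \<Rightarrow> ('f \<Rightarrow> real) \<Rightarrow> 'v::real_normed_vector set \<Rightarrow> ('v \<Rightarrow> 'v) \<Rightarrow> 'f set" where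
  "sigmaSp F0 re nrm D f = {s \<in> F0. \<not> kerQ_trivial re nrm s D f}"

definition sigmaSc :: "'f set \<Rightarrow> ('f \<Rightarrow> real) \<Rightarrow> ('f \<Rightarrow> real) \<Rightarrow> 'v::real_normed_vector set \<Rightarrow> 'v set \<Rightarrow> ('v \<Rightarrow> 'v) \<Rightarrow> 'f set" where
  "sigmaSc F0 re nrm W D f = {s \<in> F0. kerQ_trivial re nrm s D f
      \<and> W \<subseteq> closure (ranQ re nrm s D f) \<and> ranQ re nrm s D f \<noteq> W}"

definition sigmaSr :: "'f set \<Rightarrow> ('f \<Rightarrow> real) \<Rightarrow> ('f \<Rightarrow> real) \<Rightarrow> 'v::real_normed_vector set \<Rightarrow> 'v set \<Rightarrow> ('v \<Rightarrow> 'v) \<Rightarrow> 'f set" where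
  "sigmaSr F0 re nrm W D f = {s \<in> F0. kerQ_trivial re nrm s D f
      \<and> \<not> W \<subseteq> closure (ranQ re nrm s D f)}"

definition Thm17_claim ::
  "('v::real_normed_vector \<Rightarrow> 'f \<Rightarrow> 'v) \<Rightarrow> 'f set \<Rightarrow> ('f \<Rightarrow> real) \<Rightarrow> ('f \<Rightarrow> real)
    \<Rightarrow> ('v set \<Rightarrow> ('v \<Rightarrow> 'v) \<Rightarrow> bool) \<Rightarrow> bool" where
  "Thm17_claim rmul F0 re nrm inK \<longleftrightarrow>
    (\<forall>D f E1 E2.
       inK D f
     \<and> rhoS F0 re nrm UNIV D f \<noteq> {}
     \<and> bounded_rop rmul E1 \<and> bounded_rop rmul E2
     \<and> E1 \<circ> E1 = E1 \<and> E2 \<circ> E2 = E2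
     \<and> (\<forall>x. E1 x + E2 x = x)
     \<and> (\<forall>E\<in>{E1, E2}. E ` D \<subseteq> D \<and> f ` (E ` D) \<subseteq> range E
                       \<and> closed_rop rmul (range E) (E ` D) f)
     \<longrightarrow>
       \<comment> \<open>(i)\<close>
       (\<forall>E\<in>{E1, E2}. \<forall>v\<in>D. E (f v) = f (E v))
       \<comment> \<open>(ii)\<close>
     \<and> (\<forall>E\<in>{E1, E2}. dom2 (E ` D) f = E ` (dom2 D f))
       \<comment> \<open>(iii)\<close>
     \<and> (\<forall>s\<in>F0. ranQ re nrm s D f
              = {x + y | x y. x \<in> ranQ re nrm s (E1 ` D) f \<and> y \<in> ranQ re nrm s (E2 ` D) f}
            \<and> ranQ re nrm s (E1 ` D) f \<inter> ranQ re nrm s (E2 ` D) f = {0})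
       \<comment> \<open>(iv)\<close>
     \<and> sigmaS F0 re nrm UNIV D f
         = sigmaS F0 re nrm (range E1) (E1 ` D) f \<union> sigmaS F0 re nrm (range E2) (E2 ` D) f
       \<comment> \<open>(v)\<close>
     \<and> sigmaSp F0 re nrm D f = sigmaSp F0 re nrm (E1 ` D) f \<union> sigmaSp F0 re nrm (E2 ` D) f
       \<comment> \<open>(vi), (vii)\<close>
     \<and> (sigmaS F0 re nrm (range E1) (E1 ` D) f \<inter> sigmaS F0 re nrm (range E2) (E2 ` D) f = {}
        \<longrightarrow> sigmaSc F0 re nrm UNIV D f
              = sigmaSc F0 re nrm (range E1) (E1 ` D) f \<union> sigmaSc F0 re nrm (range E2) (E2 ` D) f
          \<and> sigmaSr F0 re nrm UNIV D f
              = sigmaSr F0 re nrm (range E1) (E1 ` D) f \<union> sigmaSr F0 re nrm (range E2) (E2 ` D) f))"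

datatype quat = Quat (qre: real) (qi: real) (qj: real) (qk: real)

definition qadd :: "quat \<Rightarrow> quat \<Rightarrow> quat" where
  "qadd p q = Quat (qre p + qre q) (qi p + qi q) (qj p + qj q) (qk p + qk q)"

definition qmul :: "quat \<Rightarrow> quat \<Rightarrow> quat" where
  "qmul p q = Quat
     (qre p * qre q - qi p * qi q - qj p * qj q - qk p * qk q)
     (qre p * qi q + qi p * qre q + qj p * qk q - qk p * qj q)
     (qre p * qj q - qi p * qk q + qj p * qre q + qk p * qi q)
     (qre p * qk q + qi p * qj q - qj p * qi q + qk p * qre q)"

definition qnorm :: "quat \<Rightarrow> real" where
  "qnorm q = sqrt ((qre q)\<^sup>2 + (qi q)\<^sup>2 + (qj q)\<^sup>2 + (qk q)\<^sup>2)"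

definition qof_real :: "real \<Rightarrow> quat" where
  "qof_real r = Quat r 0 0 0"

definition two_sided_quat_banach :: "(quat \<Rightarrow> 'v::banach \<Rightarrow> 'v) \<Rightarrow> ('v \<Rightarrow> quat \<Rightarrow> 'v) \<Rightarrow> bool" where
  "two_sided_quat_banach lmul rmul \<longleftrightarrow>
     (\<forall>r x. lmul (qof_real r) x = r *\<^sub>R x \<and> rmul x (qof_real r) = r *\<^sub>R x)
   \<and> (\<forall>a x y. lmul a (x + y) = lmul a x + lmul a y \<and> rmul (x + y) a = rmul x a + rmul y a)
   \<and> (\<forall>a b x. lmul (qadd a b) x = lmul a x + lmul b x \<and> rmul x (qadd a b) = rmul x a + rmul x b)
   \<and> (\<forall>a b x. lmul a (lmul b x) = lmul (qmul a b) x \<and> rmul (rmul x a) b = rmul x (qmul a b))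
   \<and> (\<forall>a b x. lmul a (rmul x b) = rmul (lmul a x) b)
   \<and> (\<forall>a x. norm (lmul a x) = qnorm a * norm x \<and> norm (rmul x a) = qnorm a * norm x)"

text \<open>Generators e_i indexed by a finite linearly ordered type 'n with n = CARD('n).
  Elements of R_n: real coefficient vectors indexed by blades A (subsets of 'n), e_A = e_a1...e_ak (a1<...<ak).
  Elements of V_R \<otimes> R_n: 'w-valued coefficient vectors indexed by blades.\<close>

definition cl_sign :: "'n::{finite,linorder} set \<Rightarrow> 'n set \<Rightarrow> real" where
  "cl_sign A B = (-1) ^ card {(a, b). a \<in> A \<and> b \<in> B \<and> b < a} * (-1) ^ card (A \<inter> B)"

text \<open>e_A e_B = cl_sign A B e_(A sym.diff. B)\<close>

definition cl_rmul :: "('w::real_vector ^ ('n::{finite,linorder} set)) \<Rightarrow> real ^ ('n set) \<Rightarrow> 'w ^ ('n set)" where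
  "cl_rmul v a = (\<chi> C. \<Sum>A\<in>UNIV. \<Sum>B\<in>UNIV.
      if (A - B) \<union> (B - A) = C then (cl_sign A B * a $ B) *\<^sub>R (v $ A) else 0)"

definition paravectors :: "(real ^ ('n::{finite,linorder} set)) set" where
  "paravectors = {a. \<forall>B. 2 \<le> card B \<longrightarrow> a $ B = 0}"

definition cl_re :: "real ^ ('n::{finite,linorder} set) \<Rightarrow> real" where
  "cl_re a = a $ {}"

definition cl_abs :: "real ^ ('n::{finite,linorder} set) \<Rightarrow> real" where
  "cl_abs a = sqrt (\<Sum>B\<in>{B. card B \<le> 1}. (a $ B)\<^sup>2)"

definition real_closed_op :: "'w::real_normed_vector set \<Rightarrow> ('w \<Rightarrow> 'w) \<Rightarrow> bool" where
  "real_closed_op D g \<longleftrightarrow> subspace D \<and> (\<forall>x\<in>D. \<forall>y\<in>D. g (x + y) = g x + g y)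
      \<and> (\<forall>x\<in>D. \<forall>r. g (r *\<^sub>R x) = r *\<^sub>R g x) \<and> closed {(x, g x) | x. x \<in> D}"

text \<open>operators of paravector type T = T_0 + sum_i T_i e_i (index None for T_0, Some i for T_i),
  acting as T(sum_A v_A e_A) = sum_A T_0 v_A e_A + sum_i sum_A T_i v_A e_i e_A,
  with dom(T) = (intersection of the dom(T_i)) \<otimes> R_n\<close>
definition paravector_type_op :: "('w::real_normed_vector ^ ('n::{finite,linorder} set)) set
    \<Rightarrow> ('w ^ ('n set) \<Rightarrow> 'w ^ ('n set)) \<Rightarrow> bool" where
  "paravector_type_op D f \<longleftrightarrow> (\<exists>(Tdom :: 'n option \<Rightarrow> 'w set) Tfun.
      (\<forall>j. real_closed_op (Tdom j) (Tfun j))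
    \<and> D = {v. \<forall>A j. v $ A \<in> Tdom j}
    \<and> (\<forall>v\<in>D. f v = (\<chi> C. Tfun None (v $ C)
          + (\<Sum>i\<in>UNIV. \<Sum>A\<in>UNIV. if ({i} - A) \<union> (A - {i}) = C
                then cl_sign {i} A *\<^sub>R Tfun (Some i) (v $ A) else 0))))"

end

theory Submission
  imports Defs
begin

text \<open>Since \<open>E\<^sub>1 + E\<^sub>2 = I\<close> and \<open>T\<close> maps \<open>E\<^sub>i(dom T)\<close> into \<open>V\<^sub>i\<close>, additivity of \<open>T\<close>
  gives \<open>E\<^sub>i T = T E\<^sub>i\<close>, hence \<open>E\<^sub>i \<Q>\<^sub>s(T) = \<Q>\<^sub>s(T) E\<^sub>i\<close> on \<open>dom(T\<^sup>2)\<close>: the operator \<open>\<Q>\<^sub>s(T)\<close>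
  splits as \<open>\<Q>\<^sub>s(T\<^sub>1) \<oplus> \<Q>\<^sub>s(T\<^sub>2)\<close>. Kernel, range, density of the range and bounded
  invertibility of a direct sum are then read off componentwise, the bounded inverse of
  \<open>\<Q>\<^sub>s(T)\<close> being \<open>\<Q>\<^sub>s(T\<^sub>1)\<^sup>-\<^sup>1 E\<^sub>1 + \<Q>\<^sub>s(T\<^sub>2)\<^sup>-\<^sup>1 E\<^sub>2\<close>. For (vi) and (vii), disjointness of the
  spectra lets one of the two components be boundedly invertible at each \<open>s\<close>, so only the
  other one decides which part of the spectrum \<open>s\<close> belongs to.

  Only additivity of \<open>T\<close> and real linearity of the \<open>E\<^sub>i\<close> enter.\<close>

section \<open>Complementary projections\<close>

locale complementary_projections =
  fixes E1 E2 :: "'v::real_normed_vector \<Rightarrow> 'v"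
  assumes bounded_linear_E1: "bounded_linear E1"
    and bounded_linear_E2: "bounded_linear E2"
    and E1_idem: "E1 (E1 x) = E1 x"
    and E2_idem: "E2 (E2 x) = E2 x"
    and E1_plus_E2: "E1 x + E2 x = x"
begin

text \<open>The roles of \<open>E1\<close> and \<open>E2\<close> are symmetric: each lemma stated for \<open>E1\<close> is available
  for \<open>E2\<close> under the prefix \<open>swap\<close>, but only after the locale context has been re-entered.\<close>

sublocale swap: complementary_projections E2 E1
  by (rule complementary_projections.intro[OF bounded_linear_E2 bounded_linear_E1 E2_idem E1_idem])
    (metis add.commute E1_plus_E2)

lemma linear_E1: "linear E1"
  using bounded_linear_E1 by (rule bounded_linear.linear)

lemma E1_E2: "E1 (E2 x) = 0"
proof -
  have "E2 x = x - E1 x" using E1_plus_E2[of x] by (simp add: algebra_simps)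
  then show ?thesis by (simp add: linear_diff[OF linear_E1] E1_idem)
qed

lemma E1_on_range_E1: "y \<in> range E1 \<Longrightarrow> E1 y = y"
  using E1_idem by auto

lemma E1_on_range_E2: "y \<in> range E2 \<Longrightarrow> E1 y = 0"
  using E1_E2 by auto

lemma E1_add_parts: "x \<in> range E1 \<Longrightarrow> y \<in> range E2 \<Longrightarrow> E1 (x + y) = x"
  using linear_add[OF linear_E1, of x y] E1_on_range_E1[of x] E1_on_range_E2[of y] by simp

lemma bounded_on_range_E1_comp:
  assumes "\<And>w. w \<in> range E1 \<Longrightarrow> norm (B w) \<le> K * norm w"
  shows "\<exists>C. \<forall>w. norm (B (E1 w)) \<le> C * norm w"
proof -
  obtain C where C: "C \<ge> 0" "\<And>x. norm (E1 x) \<le> norm x * C"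
    using bounded_linear.nonneg_bounded[OF bounded_linear_E1] by blast
  have "norm (B (E1 w)) \<le> (max K 0 * C) * norm w" for w
  proof -
    have "norm (B (E1 w)) \<le> K * norm (E1 w)" using assms by blast
    also have "\<dots> \<le> max K 0 * norm (E1 w)" by (intro mult_right_mono) auto
    also have "\<dots> \<le> max K 0 * (norm w * C)" using C(2) by (intro mult_left_mono) auto
    finally show ?thesis by (simp add: mult_ac)
  qed
  then show ?thesis by blast
qed

lemma E1_image_set_plus_subset:
  assumes "R1 \<subseteq> range E1" "R2 \<subseteq> range E2"
  shows "E1 ` (R1 + R2) \<subseteq> R1"
proof
  fix z assume "z \<in> E1 ` (R1 + R2)"
  then obtain x y where xy: "x \<in> R1" "y \<in> R2" and z: "z = E1 (x + y)"
    by (auto elim: set_plus_elim)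
  have "E1 (x + y) = x" using xy assms by (intro E1_add_parts) auto
  then show "z \<in> R1" using xy z by simp
qed

lemma range_E1_subset_if_set_plus_covers:
  assumes "R1 \<subseteq> range E1" "R2 \<subseteq> range E2" "R1 + R2 = UNIV"
  shows "range E1 \<subseteq> R1"
proof
  fix w assume "w \<in> range E1"
  then have "w = E1 w" by (rule E1_on_range_E1[symmetric])
  also have "E1 w \<in> E1 ` (R1 + R2)" using assms(3) by blast
  also have "\<dots> \<subseteq> R1" by (rule E1_image_set_plus_subset[OF assms(1,2)])
  finally show "w \<in> R1" .
qed

lemma range_E1_subset_closure_if_set_plus_dense:
  assumes "R1 \<subseteq> range E1" "R2 \<subseteq> range E2" "closure (R1 + R2) = UNIV"
  shows "range E1 \<subseteq> closure R1"
proof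
  fix w assume "w \<in> range E1"
  then have "w = E1 w" by (rule E1_on_range_E1[symmetric])
  also have "E1 w \<in> closure (E1 ` (R1 + R2))"
    using closure_bounded_linear_image_subset[OF bounded_linear_E1] assms(3) by blast
  also have "\<dots> \<subseteq> closure R1"
    by (rule closure_mono[OF E1_image_set_plus_subset[OF assms(1,2)]])
  finally show "w \<in> closure R1" .
qed

end

context complementary_projections
begin

lemma range_E1_inter_range_E2: "range E1 \<inter> range E2 = {0}"
proof -
  have "y = 0" if "y \<in> range E1" "y \<in> range E2" for y
    using E1_on_range_E1[OF that(1)] E1_on_range_E2[OF that(2)] by simp
  moreover have "0 \<in> range E1 \<inter> range E2"
    using linear_0[OF linear_E1] linear_0[OF swap.linear_E1] by (metis IntI rangeI)
  ultimately show ?thesis by blast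
qed

lemma set_plus_covers_iff:
  assumes "R1 \<subseteq> range E1" "R2 \<subseteq> range E2"
  shows "R1 + R2 = UNIV \<longleftrightarrow> range E1 \<subseteq> R1 \<and> range E2 \<subseteq> R2"
proof
  assume "R1 + R2 = UNIV"
  then show "range E1 \<subseteq> R1 \<and> range E2 \<subseteq> R2"
    using range_E1_subset_if_set_plus_covers[OF assms]
      swap.range_E1_subset_if_set_plus_covers[OF assms(2,1)] by (simp add: add.commute)
next
  assume "range E1 \<subseteq> R1 \<and> range E2 \<subseteq> R2"
  then have "E1 z + E2 z \<in> R1 + R2" for z by blast
  then show "R1 + R2 = UNIV" by (metis E1_plus_E2 UNIV_eq_I)
qed

lemma set_plus_dense_iff:
  assumes "R1 \<subseteq> range E1" "R2 \<subseteq> range E2"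
  shows "closure (R1 + R2) = UNIV \<longleftrightarrow> range E1 \<subseteq> closure R1 \<and> range E2 \<subseteq> closure R2"
proof
  assume "closure (R1 + R2) = UNIV"
  then show "range E1 \<subseteq> closure R1 \<and> range E2 \<subseteq> closure R2"
    using range_E1_subset_closure_if_set_plus_dense[OF assms]
      swap.range_E1_subset_closure_if_set_plus_dense[OF assms(2,1)] by (simp add: add.commute)
next
  assume "range E1 \<subseteq> closure R1 \<and> range E2 \<subseteq> closure R2"
  then have "E1 z + E2 z \<in> closure R1 + closure R2" for z by blast
  then have "z \<in> closure (R1 + R2)" for z using closure_sum E1_plus_E2 by (metis subsetD)
  then show "closure (R1 + R2) = UNIV" by blast
qed

end

section \<open>Operators reduced by complementary projections\<close>

lemma rhoSI:
  assumes "s \<in> F0"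
    and "\<And>w. w \<in> W \<Longrightarrow> B w \<in> dom2 D f \<and> Qop f (re s) (nrm s) (B w) = w"
    and "\<And>x. x \<in> dom2 D f \<Longrightarrow> B (Qop f (re s) (nrm s) x) = x"
    and "\<And>w. w \<in> W \<Longrightarrow> norm (B w) \<le> K * norm w"
  shows "s \<in> rhoS F0 re nrm W D f"
  unfolding rhoS_def using assms by blast

lemma rhoSE:
  assumes "s \<in> rhoS F0 re nrm W D f"
  obtains B K where "s \<in> F0"
    and "\<And>w. w \<in> W \<Longrightarrow> B w \<in> dom2 D f \<and> Qop f (re s) (nrm s) (B w) = w"
    and "\<And>x. x \<in> dom2 D f \<Longrightarrow> B (Qop f (re s) (nrm s) x) = x"
    and "\<And>w. w \<in> W \<Longrightarrow> norm (B w) \<le> K * norm w"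
  using assms unfolding rhoS_def by blast

lemma rhoS_imp_subset_ranQ: "s \<in> rhoS F0 re nrm W D f \<Longrightarrow> W \<subseteq> ranQ re nrm s D f"
  unfolding ranQ_def by (erule rhoSE) (metis image_eqI subsetI)

lemma rhoS_imp_kerQ_trivial:
  assumes "s \<in> rhoS F0 re nrm W D f" "0 \<in> D" "f 0 = 0"
  shows "kerQ_trivial re nrm s D f"
proof -
  obtain B where B: "\<And>x. x \<in> dom2 D f \<Longrightarrow> B (Qop f (re s) (nrm s) x) = x"
    using assms(1) by (elim rhoSE) blast
  have "0 \<in> dom2 D f" "Qop f (re s) (nrm s) 0 = 0"
    using assms(2,3) by (simp_all add: dom2_def Qop_def)
  then show ?thesis using B unfolding kerQ_trivial_def by metis
qed

definition additive_operator :: "'v::monoid_add set \<Rightarrow> ('v \<Rightarrow> 'v) \<Rightarrow> bool" where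
  "additive_operator D f \<longleftrightarrow> 0 \<in> D \<and> (\<forall>x\<in>D. \<forall>y\<in>D. x + y \<in> D \<and> f (x + y) = f x + f y)"

locale reducing_projections = complementary_projections E1 E2
  for E1 E2 :: "'v::real_normed_vector \<Rightarrow> 'v" +
  fixes D :: "'v set" and f :: "'v \<Rightarrow> 'v"
  assumes additive: "additive_operator D f"
    and E1_dom: "E1 ` D \<subseteq> D" and E2_dom: "E2 ` D \<subseteq> D"
    and f_E1_dom: "f ` E1 ` D \<subseteq> range E1" and f_E2_dom: "f ` E2 ` D \<subseteq> range E2"
begin

sublocale swap: reducing_projections E2 E1 D f
  by (intro reducing_projections.intro reducing_projections_axioms.intro
      swap.complementary_projections_axioms additive E2_dom E1_dom f_E2_dom f_E1_dom)

lemma zero_in_dom: "0 \<in> D"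
  using additive by (simp add: additive_operator_def)

lemma add_in_dom: "x \<in> D \<Longrightarrow> y \<in> D \<Longrightarrow> x + y \<in> D"
  using additive by (simp add: additive_operator_def)

lemma f_add: "x \<in> D \<Longrightarrow> y \<in> D \<Longrightarrow> f (x + y) = f x + f y"
  using additive by (simp add: additive_operator_def)

lemma f_zero: "f 0 = 0"
  using f_add[OF zero_in_dom zero_in_dom] by simp

lemma E1_f_commute:
  assumes "v \<in> D"
  shows "E1 (f v) = f (E1 v)"
proof -
  have "f v = f (E1 v) + f (E2 v)"
    using f_add[of "E1 v" "E2 v"] E1_dom E2_dom assms E1_plus_E2[of v] by auto
  moreover have "f (E1 v) \<in> range E1" "f (E2 v) \<in> range E2"
    using f_E1_dom f_E2_dom assms by auto
  ultimately show ?thesis by (simp add: E1_add_parts)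
qed

lemma dom2_add: "x \<in> dom2 D f \<Longrightarrow> y \<in> dom2 D f \<Longrightarrow> x + y \<in> dom2 D f"
  by (simp add: dom2_def add_in_dom f_add)

lemma Qop_add:
  assumes "x \<in> dom2 D f" "y \<in> dom2 D f"
  shows "Qop f r m (x + y) = Qop f r m x + Qop f r m y"
  using assms by (simp add: dom2_def Qop_def f_add scaleR_add_right algebra_simps)

lemma Qop_E1_commute:
  assumes "x \<in> dom2 D f"
  shows "E1 (Qop f r m x) = Qop f r m (E1 x)"
  using assms E1_dom
  by (auto simp: dom2_def Qop_def E1_f_commute linear_diff[OF linear_E1] linear_add[OF linear_E1]
      linear_scale[OF linear_E1])

lemma dom2_part_subset: "dom2 (E1 ` D) f \<subseteq> dom2 D f"
  using E1_dom by (auto simp: dom2_def)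

lemma dom2_part: "dom2 (E1 ` D) f = E1 ` dom2 D f"
proof
  show "dom2 (E1 ` D) f \<subseteq> E1 ` dom2 D f"
  proof
    fix x assume x: "x \<in> dom2 (E1 ` D) f"
    then have "x = E1 x" by (auto simp: dom2_def E1_idem)
    with x dom2_part_subset show "x \<in> E1 ` dom2 D f" by blast
  qed
  show "E1 ` dom2 D f \<subseteq> dom2 (E1 ` D) f"
    by (auto simp: dom2_def E1_f_commute[symmetric])
qed

lemma zero_in_ranQ_part: "0 \<in> ranQ re nrm s (E1 ` D) f"
proof -
  have "0 \<in> dom2 (E1 ` D) f"
    using zero_in_dom linear_0[OF linear_E1] f_zero by (force simp: dom2_def)
  then show ?thesis unfolding ranQ_def by (force simp: Qop_def f_zero)
qed

lemma ranQ_part_subset: "ranQ re nrm s (E1 ` D) f \<subseteq> range E1"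
proof
  fix y assume "y \<in> ranQ re nrm s (E1 ` D) f"
  then obtain x where x: "x \<in> dom2 (E1 ` D) f" and y: "y = Qop f (re s) (nrm s) x"
    by (auto simp: ranQ_def)
  have "E1 x = x" using x by (auto simp: dom2_def E1_idem)
  then have "E1 y = y" using Qop_E1_commute[OF subsetD[OF dom2_part_subset x]] y by simp
  then show "y \<in> range E1" by (metis rangeI)
qed

lemma rhoS_part:
  assumes "s \<in> rhoS F0 re nrm UNIV D f"
  shows "s \<in> rhoS F0 re nrm (range E1) (E1 ` D) f"
proof -
  let ?Q = "Qop f (re s) (nrm s)"
  obtain B K where s: "s \<in> F0" and right: "\<And>w. B w \<in> dom2 D f \<and> ?Q (B w) = w"
    and left: "\<And>x. x \<in> dom2 D f \<Longrightarrow> B (?Q x) = x" and bound: "\<And>w. norm (B w) \<le> K * norm w"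
    using assms by (rule rhoSE) blast
  have dom: "B w \<in> dom2 (E1 ` D) f" if "w \<in> range E1" for w
  proof -
    have Bw: "B w \<in> dom2 D f" "?Q (B w) = w" using right[of w] by simp_all
    have E1Bw: "E1 (B w) \<in> dom2 (E1 ` D) f" using Bw(1) dom2_part by blast
    have "?Q (E1 (B w)) = E1 w"
      using Qop_E1_commute[OF Bw(1), of "re s" "nrm s"] Bw(2) by simp
    also have "\<dots> = w" using E1_on_range_E1[OF that] .
    finally have "B (?Q (E1 (B w))) = B w" by simp
    then have "E1 (B w) = B w"
      using left[OF subsetD[OF dom2_part_subset E1Bw]] by simp
    then show ?thesis using E1Bw by simp
  qed
  show ?thesis
  proof (rule rhoSI[OF s, where B = B and K = K])
    show "B w \<in> dom2 (E1 ` D) f \<and> ?Q (B w) = w" if "w \<in> range E1" for w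
      using dom[OF that] right[of w] by simp
    show "B (?Q x) = x" if "x \<in> dom2 (E1 ` D) f" for x
      using left[OF subsetD[OF dom2_part_subset that]] .
  qed (rule bound)
qed

end

context reducing_projections
begin

lemma ranQ_eq_set_plus:
  "ranQ re nrm s D f = ranQ re nrm s (E1 ` D) f + ranQ re nrm s (E2 ` D) f"
proof
  let ?Q = "Qop f (re s) (nrm s)"
  show "ranQ re nrm s D f \<subseteq> ranQ re nrm s (E1 ` D) f + ranQ re nrm s (E2 ` D) f"
  proof
    fix z assume "z \<in> ranQ re nrm s D f"
    then obtain x where x: "x \<in> dom2 D f" and z: "z = ?Q x" by (auto simp: ranQ_def)
    have parts: "E1 x \<in> dom2 (E1 ` D) f" "E2 x \<in> dom2 (E2 ` D) f"
      using x dom2_part swap.dom2_part by blast+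
    have "z = ?Q (E1 x) + ?Q (E2 x)"
      using z E1_plus_E2[of x] Qop_add[OF subsetD[OF dom2_part_subset parts(1)]
          subsetD[OF swap.dom2_part_subset parts(2)]] by simp
    moreover have "?Q (E1 x) \<in> ranQ re nrm s (E1 ` D) f"
      unfolding ranQ_def by (rule imageI[OF parts(1)])
    moreover have "?Q (E2 x) \<in> ranQ re nrm s (E2 ` D) f"
      unfolding ranQ_def by (rule imageI[OF parts(2)])
    ultimately show "z \<in> ranQ re nrm s (E1 ` D) f + ranQ re nrm s (E2 ` D) f"
      by (simp add: set_plus_intro)
  qed
  show "ranQ re nrm s (E1 ` D) f + ranQ re nrm s (E2 ` D) f \<subseteq> ranQ re nrm s D f"
  proof
    fix z assume "z \<in> ranQ re nrm s (E1 ` D) f + ranQ re nrm s (E2 ` D) f"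
    then obtain u v where u: "u \<in> dom2 (E1 ` D) f" and v: "v \<in> dom2 (E2 ` D) f"
      and z: "z = ?Q u + ?Q v"
      by (auto simp: ranQ_def elim!: set_plus_elim)
    have "u \<in> dom2 D f" "v \<in> dom2 D f"
      using u v dom2_part_subset swap.dom2_part_subset by blast+
    then show "z \<in> ranQ re nrm s D f"
      unfolding ranQ_def z using Qop_add dom2_add by (metis imageI)
  qed
qed

lemma ranQ_parts_inter: "ranQ re nrm s (E1 ` D) f \<inter> ranQ re nrm s (E2 ` D) f = {0}"
proof -
  have "ranQ re nrm s (E1 ` D) f \<inter> ranQ re nrm s (E2 ` D) f \<subseteq> range E1 \<inter> range E2"
    by (rule Int_mono[OF ranQ_part_subset swap.ranQ_part_subset])
  moreover have "0 \<in> ranQ re nrm s (E1 ` D) f \<inter> ranQ re nrm s (E2 ` D) f"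
    by (rule IntI[OF zero_in_ranQ_part swap.zero_in_ranQ_part])
  ultimately show ?thesis
    using range_E1_inter_range_E2 by blast
qed

lemma kerQ_trivial_iff:
  "kerQ_trivial re nrm s D f \<longleftrightarrow>
     kerQ_trivial re nrm s (E1 ` D) f \<and> kerQ_trivial re nrm s (E2 ` D) f"
proof
  assume "kerQ_trivial re nrm s D f"
  then show "kerQ_trivial re nrm s (E1 ` D) f \<and> kerQ_trivial re nrm s (E2 ` D) f"
    using dom2_part_subset swap.dom2_part_subset by (auto simp: kerQ_trivial_def)
next
  let ?Q = "Qop f (re s) (nrm s)"
  assume parts: "kerQ_trivial re nrm s (E1 ` D) f \<and> kerQ_trivial re nrm s (E2 ` D) f"
  show "kerQ_trivial re nrm s D f" unfolding kerQ_trivial_def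
  proof (intro ballI impI)
    fix x assume x: "x \<in> dom2 D f" and Qx: "?Q x = 0"
    have "?Q (E1 x) = 0"
      using Qop_E1_commute[OF x, of "re s" "nrm s"] Qx linear_0[OF linear_E1] by simp
    then have "E1 x = 0"
      using parts dom2_part x unfolding kerQ_trivial_def by blast
    moreover have "?Q (E2 x) = 0"
      using swap.Qop_E1_commute[OF x, of "re s" "nrm s"] Qx linear_0[OF swap.linear_E1] by simp
    then have "E2 x = 0"
      using parts swap.dom2_part x unfolding kerQ_trivial_def by blast
    ultimately show "x = 0" using E1_plus_E2[of x] by simp
  qed
qed

lemma rhoS_join:
  assumes "s \<in> rhoS F0 re nrm (range E1) (E1 ` D) f"
    and "s \<in> rhoS F0 re nrm (range E2) (E2 ` D) f"
  shows "s \<in> rhoS F0 re nrm UNIV D f"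
proof -
  let ?Q = "Qop f (re s) (nrm s)"
  obtain B1 K1 where s: "s \<in> F0"
    and right1: "\<And>w. w \<in> range E1 \<Longrightarrow> B1 w \<in> dom2 (E1 ` D) f \<and> ?Q (B1 w) = w"
    and left1: "\<And>x. x \<in> dom2 (E1 ` D) f \<Longrightarrow> B1 (?Q x) = x"
    and bound1: "\<And>w. w \<in> range E1 \<Longrightarrow> norm (B1 w) \<le> K1 * norm w"
    using assms(1) by (elim rhoSE) blast
  obtain B2 K2
    where right2: "\<And>w. w \<in> range E2 \<Longrightarrow> B2 w \<in> dom2 (E2 ` D) f \<and> ?Q (B2 w) = w"
    and left2: "\<And>x. x \<in> dom2 (E2 ` D) f \<Longrightarrow> B2 (?Q x) = x"
    and bound2: "\<And>w. w \<in> range E2 \<Longrightarrow> norm (B2 w) \<le> K2 * norm w"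
    using assms(2) by (elim rhoSE) blast
  obtain C1 where C1: "\<And>w. norm (B1 (E1 w)) \<le> C1 * norm w"
    using bounded_on_range_E1_comp[OF bound1] by blast
  obtain C2 where C2: "\<And>w. norm (B2 (E2 w)) \<le> C2 * norm w"
    using swap.bounded_on_range_E1_comp[OF bound2] by blast
  define B where "B w = B1 (E1 w) + B2 (E2 w)" for w
  have dom_B1: "B1 (E1 w) \<in> dom2 D f" for w
    using right1[OF rangeI] dom2_part_subset by blast
  have dom_B2: "B2 (E2 w) \<in> dom2 D f" for w
    using right2[OF rangeI] swap.dom2_part_subset by blast
  show ?thesis
  proof (rule rhoSI[OF s, where B = B and K = "C1 + C2"])
    show "B w \<in> dom2 D f \<and> ?Q (B w) = w" for w
    proof
      show "B w \<in> dom2 D f" unfolding B_def by (rule dom2_add[OF dom_B1 dom_B2])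
      have "?Q (B w) = ?Q (B1 (E1 w)) + ?Q (B2 (E2 w))"
        unfolding B_def by (rule Qop_add[OF dom_B1 dom_B2])
      also have "\<dots> = E1 w + E2 w" using right1[OF rangeI] right2[OF rangeI] by simp
      finally show "?Q (B w) = w" by (simp add: E1_plus_E2)
    qed
    show "B (?Q x) = x" if x: "x \<in> dom2 D f" for x
    proof -
      have "B (?Q x) = B1 (?Q (E1 x)) + B2 (?Q (E2 x))"
        unfolding B_def using Qop_E1_commute[OF x] swap.Qop_E1_commute[OF x] by simp
      also have "\<dots> = E1 x + E2 x"
        using left1[of "E1 x"] left2[of "E2 x"] dom2_part swap.dom2_part x by simp
      finally show ?thesis by (simp add: E1_plus_E2)
    qed
    show "norm (B w) \<le> (C1 + C2) * norm w" for w
      using norm_triangle_ineq[of "B1 (E1 w)" "B2 (E2 w)"] C1[of w] C2[of w]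
      unfolding B_def by (simp add: distrib_right)
  qed
qed

lemma rhoS_iff:
  "s \<in> rhoS F0 re nrm UNIV D f \<longleftrightarrow>
     s \<in> rhoS F0 re nrm (range E1) (E1 ` D) f \<and> s \<in> rhoS F0 re nrm (range E2) (E2 ` D) f"
  by (metis rhoS_part swap.rhoS_part rhoS_join)

lemma sigmaS_union:
  "sigmaS F0 re nrm UNIV D f
     = sigmaS F0 re nrm (range E1) (E1 ` D) f \<union> sigmaS F0 re nrm (range E2) (E2 ` D) f"
  by (auto simp: sigmaS_def rhoS_iff)

lemma sigmaSp_union:
  "sigmaSp F0 re nrm D f = sigmaSp F0 re nrm (E1 ` D) f \<union> sigmaSp F0 re nrm (E2 ` D) f"
  by (auto simp: sigmaSp_def kerQ_trivial_iff)

lemma sigmaSc_sigmaSr_if_rhoS_part: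
  assumes rho1: "s \<in> rhoS F0 re nrm (range E1) (E1 ` D) f"
  shows "s \<in> sigmaSc F0 re nrm UNIV D f \<longleftrightarrow> s \<in> sigmaSc F0 re nrm (range E2) (E2 ` D) f"
    and "s \<notin> sigmaSc F0 re nrm (range E1) (E1 ` D) f"
    and "s \<in> sigmaSr F0 re nrm UNIV D f \<longleftrightarrow> s \<in> sigmaSr F0 re nrm (range E2) (E2 ` D) f"
    and "s \<notin> sigmaSr F0 re nrm (range E1) (E1 ` D) f"
proof -
  let ?R = "ranQ re nrm s D f"
  let ?R1 = "ranQ re nrm s (E1 ` D) f" and ?R2 = "ranQ re nrm s (E2 ` D) f"
  have sub1: "?R1 \<subseteq> range E1" and sub2: "?R2 \<subseteq> range E2"
    by (rule ranQ_part_subset swap.ranQ_part_subset)+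
  have onto1: "?R1 = range E1"
    using rhoS_imp_subset_ranQ[OF rho1] sub1 by blast
  have "0 \<in> E1 ` D"
    using zero_in_dom linear_0[OF linear_E1] by (metis image_eqI)
  then have "kerQ_trivial re nrm s (E1 ` D) f"
    by (rule rhoS_imp_kerQ_trivial[OF rho1 _ f_zero])
  then have ker: "kerQ_trivial re nrm s D f \<longleftrightarrow> kerQ_trivial re nrm s (E2 ` D) f"
    using kerQ_trivial_iff[of re nrm s] by simp
  have "range E1 \<subseteq> closure ?R1"
    unfolding onto1 by (rule closure_subset)
  then have dense: "UNIV \<subseteq> closure ?R \<longleftrightarrow> range E2 \<subseteq> closure ?R2"
    using set_plus_dense_iff[OF sub1 sub2] unfolding ranQ_eq_set_plus top_unique by blast
  have onto: "?R = UNIV \<longleftrightarrow> ?R2 = range E2"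
    using set_plus_covers_iff[OF sub1 sub2] onto1 sub2 unfolding ranQ_eq_set_plus by blast
  show "s \<in> sigmaSc F0 re nrm UNIV D f \<longleftrightarrow> s \<in> sigmaSc F0 re nrm (range E2) (E2 ` D) f"
    unfolding sigmaSc_def mem_Collect_eq ker dense onto ..
  show "s \<in> sigmaSr F0 re nrm UNIV D f \<longleftrightarrow> s \<in> sigmaSr F0 re nrm (range E2) (E2 ` D) f"
    unfolding sigmaSr_def mem_Collect_eq ker dense ..
  show "s \<notin> sigmaSc F0 re nrm (range E1) (E1 ` D) f"
    using onto1 by (simp add: sigmaSc_def)
  show "s \<notin> sigmaSr F0 re nrm (range E1) (E1 ` D) f"
    using \<open>range E1 \<subseteq> closure ?R1\<close> by (simp add: sigmaSr_def)
qed

end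

context reducing_projections
begin

lemma sigmaSc_sigmaSr_union:
  assumes disjoint: "sigmaS F0 re nrm (range E1) (E1 ` D) f \<inter> sigmaS F0 re nrm (range E2) (E2 ` D) f = {}"
  shows "sigmaSc F0 re nrm UNIV D f
           = sigmaSc F0 re nrm (range E1) (E1 ` D) f \<union> sigmaSc F0 re nrm (range E2) (E2 ` D) f"
    and "sigmaSr F0 re nrm UNIV D f
           = sigmaSr F0 re nrm (range E1) (E1 ` D) f \<union> sigmaSr F0 re nrm (range E2) (E2 ` D) f"
proof -
  have "(s \<in> sigmaSc F0 re nrm UNIV D f \<longleftrightarrow>
          s \<in> sigmaSc F0 re nrm (range E1) (E1 ` D) f \<union> sigmaSc F0 re nrm (range E2) (E2 ` D) f)
      \<and> (s \<in> sigmaSr F0 re nrm UNIV D f \<longleftrightarrow>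
          s \<in> sigmaSr F0 re nrm (range E1) (E1 ` D) f \<union> sigmaSr F0 re nrm (range E2) (E2 ` D) f)"
    for s
  proof (cases "s \<in> F0")
    case False
    then show ?thesis by (simp add: sigmaSc_def sigmaSr_def)
  next
    case True
    then consider (rho1) "s \<in> rhoS F0 re nrm (range E1) (E1 ` D) f"
      | (rho2) "s \<in> rhoS F0 re nrm (range E2) (E2 ` D) f"
      using disjoint by (auto simp: sigmaS_def)
    then show ?thesis
    proof cases
      case rho1
      show ?thesis using sigmaSc_sigmaSr_if_rhoS_part[OF rho1] by blast
    next
      case rho2
      show ?thesis using swap.sigmaSc_sigmaSr_if_rhoS_part[OF rho2] by blast
    qed
  qed
  then show "sigmaSc F0 re nrm UNIV D f
           = sigmaSc F0 re nrm (range E1) (E1 ` D) f \<union> sigmaSc F0 re nrm (range E2) (E2 ` D) f"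
    and "sigmaSr F0 re nrm UNIV D f
           = sigmaSr F0 re nrm (range E1) (E1 ` D) f \<union> sigmaSr F0 re nrm (range E2) (E2 ` D) f"
    by blast+
qed

end

section \<open>The quaternionic and the Clifford setting\<close>

lemma bounded_linear_if_bounded_rop:
  fixes rmul :: "'v::real_normed_vector \<Rightarrow> 'f \<Rightarrow> 'v"
  assumes real_scalars: "\<And>r. \<exists>a. \<forall>x. rmul x a = r *\<^sub>R x"
    and E: "bounded_rop rmul E"
  shows "bounded_linear E"
proof -
  have add: "E (x + y) = E x + E y" for x y
    using E by (simp add: bounded_rop_def rlinear_on_def)
  have scale: "E (r *\<^sub>R x) = r *\<^sub>R E x" for r x
  proof -
    obtain a where a: "\<And>x. rmul x a = r *\<^sub>R x" using real_scalars by blast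
    have "E (rmul x a) = rmul (E x) a" using E by (simp add: bounded_rop_def rlinear_on_def)
    then show ?thesis by (simp add: a)
  qed
  obtain K where "\<And>x. norm (E x) \<le> K * norm x"
    using E by (auto simp: bounded_rop_def)
  then show ?thesis
    by (intro bounded_linear_intro[where K = K]) (simp_all add: add scale mult.commute)
qed

lemma Thm17_claimI:
  fixes rmul :: "'v::real_normed_vector \<Rightarrow> 'f \<Rightarrow> 'v"
  assumes real_scalars: "\<And>r. \<exists>a. \<forall>x. rmul x a = r *\<^sub>R x"
    and additive: "\<And>D f. inK D f \<Longrightarrow> additive_operator D f"
  shows "Thm17_claim rmul F0 re nrm inK"
  unfolding Thm17_claim_def
  apply (intro allI impI)
  subgoal premises hyps for D f E1 E2
  proof -
    interpret reducing_projections E1 E2 D f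
      using hyps
      by (intro reducing_projections.intro complementary_projections.intro
          reducing_projections_axioms.intro bounded_linear_if_bounded_rop[OF real_scalars] additive)
        (simp_all add: fun_eq_iff[of "E1 \<circ> E1"] fun_eq_iff[of "E2 \<circ> E2"])
    have sums: "ranQ re nrm s D f
        = {x + y | x y. x \<in> ranQ re nrm s (E1 ` D) f \<and> y \<in> ranQ re nrm s (E2 ` D) f}" for s
      unfolding ranQ_eq_set_plus set_plus_def by blast
    show ?thesis
      by (simp add: E1_f_commute swap.E1_f_commute dom2_part swap.dom2_part sums
          ranQ_parts_inter sigmaS_union sigmaSp_union sigmaSc_sigmaSr_union)
  qed
  done

lemma two_sided_quat_banach_real_scalars:
  assumes "two_sided_quat_banach lmul rmul"
  shows "\<exists>a. \<forall>x. rmul x a = r *\<^sub>R x"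
  using assms unfolding two_sided_quat_banach_def by (intro exI[of _ "qof_real r"]) blast

lemma closed_rop_additive: "closed_rop rmul W D f \<Longrightarrow> additive_operator D f"
  unfolding closed_rop_def rlinear_on_def rsubmod_def additive_operator_def by blast

lemma cl_sign_empty_right: "cl_sign A {} = 1"
  by (simp add: cl_sign_def)

lemma cl_rmul_real_scalars:
  "\<exists>a. \<forall>x. cl_rmul (x :: 'w::real_vector ^ ('n::{finite,linorder} set)) a = r *\<^sub>R x"
proof (intro exI allI)
  fix x :: "'w ^ ('n set)"
  define a :: "real ^ ('n set)" where "a = (\<chi> B. if B = {} then r else 0)"
  have "(if (A - B) \<union> (B - A) = C then (cl_sign A B * a $ B) *\<^sub>R (x $ A) else 0)
      = (if B = {} then (if A = C then r *\<^sub>R x $ A else 0) else 0)" for A B C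
    by (cases "B = {}") (simp_all add: a_def cl_sign_empty_right)
  then show "cl_rmul x a = r *\<^sub>R x"
    unfolding cl_rmul_def vec_eq_iff by simp
qed

lemma paravector_type_op_additive:
  fixes D :: "('w::real_normed_vector ^ ('n::{finite,linorder} set)) set"
  assumes "paravector_type_op D f"
  shows "additive_operator D f"
proof -
  obtain Tdom :: "'n option \<Rightarrow> 'w set" and Tfun
    where T: "\<And>j. real_closed_op (Tdom j) (Tfun j)"
      and D: "D = {v. \<forall>A j. v $ A \<in> Tdom j}"
      and f: "\<And>v. v \<in> D \<Longrightarrow> f v = (\<chi> C. Tfun None (v $ C)
          + (\<Sum>i\<in>UNIV. \<Sum>A\<in>UNIV. if ({i} - A) \<union> (A - {i}) = C
                then cl_sign {i} A *\<^sub>R Tfun (Some i) (v $ A) else 0))"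
    using assms unfolding paravector_type_op_def by blast
  have sub: "subspace (Tdom j)" for j
    using T[of j] unfolding real_closed_op_def by blast
  have Tadd: "Tfun j (a + b) = Tfun j a + Tfun j b" if "a \<in> Tdom j" "b \<in> Tdom j" for j a b
    using T[of j] that unfolding real_closed_op_def by blast
  have "x + y \<in> D \<and> f (x + y) = f x + f y" if x: "x \<in> D" and y: "y \<in> D" for x y
  proof
    have xA: "x $ A \<in> Tdom j" and yA: "y $ A \<in> Tdom j" for A j
      using x y D by auto
    show xy: "x + y \<in> D"
      unfolding D using xA yA sub subspace_add by fastforce
    have Tadd_comp: "Tfun j (x $ A + y $ A) = Tfun j (x $ A) + Tfun j (y $ A)" for j A
      using Tadd[OF xA yA] .
    have if_add: "(if P then a + b else 0) = (if P then a else 0) + (if P then b else 0)"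
      for P and a b :: 'w
      by simp
    show "f (x + y) = f x + f y"
      unfolding f[OF xy] f[OF x] f[OF y] vec_eq_iff
      by (simp add: Tadd_comp scaleR_add_right if_add sum.distrib algebra_simps cong: if_cong)
  qed
  moreover have "0 \<in> D"
    unfolding D using sub subspace_0 by auto
  ultimately show ?thesis
    unfolding additive_operator_def by blast
qed

theorem mainTheorem17:
  shows "(\<forall>(lmul :: quat \<Rightarrow> 'v::banach \<Rightarrow> 'v) rmul. two_sided_quat_banach lmul rmul \<longrightarrow>
            Thm17_claim rmul UNIV qre qnorm (closed_rop rmul UNIV))
       \<and> Thm17_claim (cl_rmul :: 'w::banach ^ ('n::{finite,linorder} set) \<Rightarrow> _ \<Rightarrow> _)
            paravectors cl_re cl_abs paravector_type_op"
proof (intro conjI allI impI)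
  fix lmul :: "quat \<Rightarrow> 'v \<Rightarrow> 'v" and rmul
  assume "two_sided_quat_banach lmul rmul"
  then show "Thm17_claim rmul UNIV qre qnorm (closed_rop rmul UNIV)"
    by (intro Thm17_claimI two_sided_quat_banach_real_scalars closed_rop_additive)
next
  show "Thm17_claim (cl_rmul :: 'w ^ ('n set) \<Rightarrow> _ \<Rightarrow> _) paravectors cl_re cl_abs paravector_type_op"
    by (intro Thm17_claimI cl_rmul_real_scalars paravector_type_op_additive)
qed

end
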